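(* Let $m$ be a positive integer, $\alpha>0$ and $\beta_1,\beta_2>0$. Then $$\int_0^{\infty}e^{-\alpha x}J_0(\beta_1\sqrt{x})J_m(\beta_2\sqrt{x})\,x^{m/2}\,dx=\frac1\alpha e^{-\beta_2^2/4\alpha}\left.\left(\frac{d}{dx}\right)^{m}\left[e^{-x}\left(\frac{x}{\alpha}\right)^{m/2}I_m\!\left(\beta_2\sqrt{\frac{x}{\alpha}}\right)\right]\right|_{x=\beta_1^2/4\alpha}$$ $$=\frac1\alpha\left(\frac{\beta_2}{2\alpha}\right)^{m}e^{-\frac{\beta_1^2+\beta_2^2}{4\alpha}}\sum_{n=0}^{m}(-1)^n\binom{m}{n}\left(\frac{\beta_1}{\beta_2}\right)^{n}I_n\!\left(\frac{\beta_1\beta_2}{2\alpha}\right).$$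
   Context: $J_k$ and $I_k$ denote the Bessel and modified Bessel functions of the first kind of integer order $k$. *)

theory Defs
  imports "HOL-Analysis.Analysis"
begin

definition besselJ :: "nat \<Rightarrow> real \<Rightarrow> real" where
  "besselJ k x = (\<Sum>j. (-1) ^ j / (fact j * fact (j + k)) * (x / 2) ^ (2 * j + k))"

definition besselI :: "nat \<Rightarrow> real \<Rightarrow> real" where
  "besselI k x = (\<Sum>j. 1 / (fact j * fact (j + k)) * (x / 2) ^ (2 * j + k))"

end

theory Submission
  imports Defs "HOL-Probability.Distributions"
begin

text \<open>
  Put x0 = \<beta>1^2/(4\<alpha>), y = \<beta>2^2/(4\<alpha>) and F_n(y,x) = sum_j y^j x^(j+n) / (j! (j+n)!), so that
  F_n(y,x) = (x/y)^(n/2) I_n(2 sqrt(x y)) and d/dx F_n = F_(n-1).  The m-th derivative of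
  e^(-x) F_m(y,x) is therefore e^(-x) sum_n (-1)^n (m choose n) F_n(y,x), which gives the second
  equality, and it remains to show that the integral equals
  (\<beta>2/(2\<alpha>))^m / \<alpha> e^(-x0-y) sum_n (-1)^n (m choose n) F_n(y,x0).

  Both Bessel factors are power series in x whose coefficients decay like 1/(j!)^2, so the
  integral can be computed termwise against x^k e^(-\<alpha> x).  Integrating x^i x^(m/2) J_m(\<beta>2 sqrt x)
  gives a confluent hypergeometric series in -y, which Kummer's transformation turns into e^(-y)
  times a Laguerre polynomial L_i^(m)(y).  Summing these against the coefficients of
  J_0(\<beta>1 sqrt x) is a Cauchy product with e^(-x0) whose coefficients collapse, by Vandermonde's
  identity, to the alternating sum of the F_n(y,x0).
\<close>

lemma summable_exp_scaled: "summable (\<lambda>j. C * X^j / fact j :: real)"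
  using summable_mult[OF summable_exp[of X], of C] by (simp add: field_simps)

lemma exp_sums_real: "(\<lambda>k. z^k / fact k) sums exp (z::real)"
  using exp_converges[of z] by (simp add: divide_inverse mult.commute)

section \<open>Kummer's transformation\<close>

lemma kummer_cauchy_coeff:
  fixes i m k :: nat and y :: real
  shows "(\<Sum>l\<le>k. (fact (i+m) * ((-1)^l * real (i choose l)) / fact (l+m) * y^l) * ((-y)^(k-l) / fact (k-l)))
       = (-y)^k * fact (i+k+m) / (fact k * fact (k+m))"
proof -
  have summand: "(fact (i+m) * ((-1)^l * real (i choose l)) / fact (l+m) * y^l) * ((-y)^(k-l) / fact (k-l))
      = (-y)^k * fact (i+m) / fact (k+m) * (real (i choose l) * real ((k+m) choose (k-l)))"
    if "l \<le> k" for l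
  proof -
    have binom: "real ((k+m) choose (k-l)) = fact (k+m) / (fact (k-l) * fact (l+m))"
      using binomial_fact[of "k-l" "k+m", where 'a=real] that by (simp add: algebra_simps)
    have pow: "(-y)^k = (-1)^l * y^l * (-y)^(k-l)"
      using that by (metis (no_types, lifting) le_add_diff_inverse mult.assoc power_add power_minus)
    show ?thesis unfolding binom pow by (simp add: field_simps)
  qed
  have "(\<Sum>l\<le>k. (fact (i+m) * ((-1)^l * real (i choose l)) / fact (l+m) * y^l) * ((-y)^(k-l) / fact (k-l)))
     = (\<Sum>l\<le>k. (-y)^k * fact (i+m) / fact (k+m) * (real (i choose l) * real ((k+m) choose (k-l))))"
    by (rule sum.cong[OF refl], rule summand) simp
  also have "\<dots> = (-y)^k * fact (i+m) / fact (k+m) * real (\<Sum>l\<le>k. (i choose l) * ((k+m) choose (k-l)))"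
    by (simp add: sum_distrib_left)
  also have "(\<Sum>l\<le>k. (i choose l) * ((k+m) choose (k-l))) = (i + (k+m)) choose k"
    by (rule vandermonde)
  also have "real ((i + (k+m)) choose k) = fact (i+k+m) / (fact k * fact (i+m))"
    using binomial_fact[of k "i+(k+m)", where 'a=real] by (simp add: algebra_simps)
  finally show ?thesis by (simp add: field_simps)
qed

(* i!/(i+m)! times the generalised Laguerre polynomial L_i^(m)(y) *)
definition scaled_laguerre :: "nat \<Rightarrow> nat \<Rightarrow> real \<Rightarrow> real" where
  "scaled_laguerre m i y = (\<Sum>j\<le>i. (-1)^j * real (i choose j) * y^j / fact (j+m))"

lemma kummer_transformation_sums:
  fixes y :: real and i m :: nat
  shows "(\<lambda>j. (-y)^j * fact (i+j+m) / (fact j * fact (j+m))) sums (exp (-y) * (fact (i+m) * scaled_laguerre m i y))"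
proof -
  define a where "a l = fact (i+m) * ((-1)^l * real (i choose l)) / fact (l+m) * y^l" for l
  define b where "b k = (-y)^k / fact k" for k
  have a0: "a l = 0" if "l \<notin> {..i}" for l using that by (simp add: a_def)
  have "summable (\<lambda>k. norm (a k))"
    by (rule summable_finite[of "{..i}"]) (auto simp: a0)
  moreover have "summable (\<lambda>k. norm (b k))"
    unfolding b_def using summable_exp_scaled[of 1 "\<bar>y\<bar>"] by (simp add: power_abs)
  ultimately have "(\<lambda>k. \<Sum>l\<le>k. a l * b (k - l)) sums ((\<Sum>k. a k) * (\<Sum>k. b k))"
    by (rule Cauchy_product_sums)
  moreover have "(\<Sum>k. a k) = fact (i+m) * scaled_laguerre m i y"
    by (subst suminf_finite[of "{..i}"]) (auto simp: a0 a_def scaled_laguerre_def sum_distrib_left field_simps)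
  moreover have "(\<Sum>k. b k) = exp (-y)"
    unfolding b_def using exp_sums_real[of "-y"] by (simp add: sums_iff)
  moreover have "(\<Sum>l\<le>k. a l * b (k - l)) = (-y)^k * fact (i+k+m) / (fact k * fact (k+m))" for k
    unfolding a_def b_def by (rule kummer_cauchy_coeff)
  ultimately show ?thesis by (simp add: mult.commute)
qed

section \<open>The series F_n(y,x)\<close>

definition bessel_coeff :: "real \<Rightarrow> nat \<Rightarrow> nat \<Rightarrow> real" where
  "bessel_coeff y n N = (if n \<le> N then y^(N-n) / (fact (N-n) * fact N) else 0)"

(* F_n(y,x), as a power series in x so that it can be differentiated termwise *)
definition bessel_series :: "real \<Rightarrow> nat \<Rightarrow> real \<Rightarrow> real" where
  "bessel_series y n x = (\<Sum>N. bessel_coeff y n N * x^N)"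

lemma abs_bessel_coeff_le: "\<bar>bessel_coeff y n N\<bar> \<le> (max 1 \<bar>y\<bar>)^N / fact N"
proof (cases "n \<le> N")
  case True
  have "\<bar>y\<bar>^(N-n) \<le> (max 1 \<bar>y\<bar>)^(N-n)" by (rule power_mono) auto
  also have "\<dots> \<le> (max 1 \<bar>y\<bar>)^N" by (rule power_increasing) auto
  finally have pow: "\<bar>y\<bar>^(N-n) \<le> (max 1 \<bar>y\<bar>)^N" .
  have "\<bar>bessel_coeff y n N\<bar> = \<bar>y\<bar>^(N-n) / (fact (N-n) * fact N)"
    using True by (simp add: bessel_coeff_def power_abs)
  also have "\<dots> \<le> \<bar>y\<bar>^(N-n) / fact N"
    by (rule divide_left_mono) (auto simp: fact_ge_1)
  also have "\<dots> \<le> (max 1 \<bar>y\<bar>)^N / fact N"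
    by (rule divide_right_mono[OF pow]) auto
  finally show ?thesis .
qed (simp add: bessel_coeff_def)

lemma summable_abs_bessel_coeff: "summable (\<lambda>N. \<bar>bessel_coeff y n N * x^N\<bar>)"
proof (rule summable_comparison_test[OF _ summable_exp_scaled[of 1 "max 1 \<bar>y\<bar> * \<bar>x\<bar>"]])
  have "\<bar>bessel_coeff y n N * x^N\<bar> \<le> (max 1 \<bar>y\<bar>)^N / fact N * \<bar>x\<bar>^N" for N
    unfolding abs_mult power_abs by (rule mult_right_mono[OF abs_bessel_coeff_le]) simp
  then show "\<exists>N0. \<forall>N\<ge>N0. norm \<bar>bessel_coeff y n N * x^N\<bar> \<le> 1 * (max 1 \<bar>y\<bar> * \<bar>x\<bar>) ^ N / fact N"
    by (simp add: power_mult_distrib)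
qed

lemma summable_bessel_coeff: "summable (\<lambda>N. bessel_coeff y n N * x^N)"
  by (rule summable_rabs_cancel[OF summable_abs_bessel_coeff])

lemma bessel_series_sums:
  "(\<lambda>j. y^j * x^(j+n) / (fact j * fact (j+n))) sums bessel_series y n x"
proof -
  have "(\<lambda>N. bessel_coeff y n N * x^N) sums bessel_series y n x"
    unfolding bessel_series_def by (rule summable_sums[OF summable_bessel_coeff])
  moreover have "(\<Sum>N<n. bessel_coeff y n N * x^N) = 0" by (simp add: bessel_coeff_def)
  ultimately have "(\<lambda>j. bessel_coeff y n (j+n) * x^(j+n)) sums bessel_series y n x"
    by (intro sums_iff_shift[where f="\<lambda>N. bessel_coeff y n N * x^N", THEN iffD2]) simp
  then show ?thesis by (simp add: bessel_coeff_def)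
qed

lemma DERIV_bessel_series:
  assumes "n \<ge> 1"
  shows "DERIV (bessel_series y n) x :> bessel_series y (n-1) x"
proof -
  have "diffs (bessel_coeff y n) = bessel_coeff y (n-1)"
  proof
    fix N
    have "fact (Suc N) = real (Suc N) * fact N" by (rule fact_Suc)
    then show "diffs (bessel_coeff y n) N = bessel_coeff y (n-1) N"
      using assms unfolding diffs_def bessel_coeff_def
      by (auto simp del: of_nat_Suc fact_Suc simp: Suc_diff_le)
  qed
  moreover have "DERIV (\<lambda>x. \<Sum>N. bessel_coeff y n N * x^N) x :> (\<Sum>N. diffs (bessel_coeff y n) N * x^N)"
    by (rule termdiffs_strong_converges_everywhere) (rule summable_bessel_coeff)
  ultimately show ?thesis by (simp add: bessel_series_def[abs_def])
qed

lemma alternating_binomial_sum_Suc: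
  fixes u :: "nat \<Rightarrow> real"
  shows "(\<Sum>l\<le>Suc k. real (Suc k choose l) * (-1)^l * u l)
       = (\<Sum>l\<le>k. real (k choose l) * (-1)^l * u l) - (\<Sum>l\<le>k. real (k choose l) * (-1)^l * u (Suc l))"
proof -
  define g where "g l = real (k choose l) * (-1)^l * u l" for l
  have pascal: "real (Suc k choose Suc l) * (-1)^(Suc l) * u (Suc l)
      = g (Suc l) - real (k choose l) * (-1)^l * u (Suc l)" for l
    by (simp add: g_def algebra_simps)
  have "(\<Sum>l\<le>Suc k. real (Suc k choose l) * (-1)^l * u l)
      = u 0 + (\<Sum>l\<le>k. real (Suc k choose Suc l) * (-1)^(Suc l) * u (Suc l))"
    by (subst sum.atMost_Suc_shift) simp
  also have "\<dots> = u 0 + (\<Sum>l\<le>k. g (Suc l)) - (\<Sum>l\<le>k. real (k choose l) * (-1)^l * u (Suc l))"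
    by (simp only: pascal sum_subtractf)
  also have "u 0 + (\<Sum>l\<le>k. g (Suc l)) = (\<Sum>l\<le>k. g l)"
  proof -
    have "g 0 = u 0" "g (Suc k) = 0" by (simp_all add: g_def)
    then show ?thesis using sum.atMost_Suc_shift[of g k] sum.atMost_Suc[of g k] by simp
  qed
  finally show ?thesis by (simp add: g_def)
qed

lemma higher_deriv_exp_bessel_series:
  fixes c y :: real
  assumes "k \<le> m"
  shows "(deriv ^^ k) (\<lambda>x. c * exp (-x) * bessel_series y m x)
     = (\<lambda>x. c * exp (-x) * (\<Sum>l\<le>k. real (k choose l) * (-1)^l * bessel_series y (m-k+l) x))"
  using assms
proof (induction k)
  case 0
  show ?case by simp
next
  case (Suc k)
  have "DERIV (\<lambda>x. c * exp (-x) * (\<Sum>l\<le>k. real (k choose l) * (-1)^l * bessel_series y (m-k+l) x)) x :>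
      c * exp (-x) * (\<Sum>l\<le>Suc k. real (Suc k choose l) * (-1)^l * bessel_series y (m - Suc k + l) x)" for x
  proof -
    have lower: "m-k+l-1 = m - Suc k + l" and upper: "m-k+l = m - Suc k + Suc l" for l
      using Suc.prems by auto
    have sum_deriv: "DERIV (\<lambda>x. \<Sum>l\<le>k. real (k choose l) * (-1)^l * bessel_series y (m-k+l) x) x :>
        (\<Sum>l\<le>k. real (k choose l) * (-1)^l * bessel_series y (m-k+l-1) x)"
      using Suc.prems by (intro DERIV_sum DERIV_cmult DERIV_bessel_series) auto
    have exp_deriv: "DERIV (\<lambda>x. c * exp (-x)) x :> c * (- exp (-x))"
      by (auto intro!: derivative_eq_intros)
    show ?thesis
      using DERIV_mult[OF exp_deriv sum_deriv]
      unfolding alternating_binomial_sum_Suc lower upper by (simp add: algebra_simps)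
  qed
  then show ?case
    using Suc by (auto intro!: DERIV_imp_deriv)
qed

lemma laguerre_vandermonde_step:
  fixes y :: real
  assumes "j \<le> i"
  shows "(\<Sum>n\<le>i-j. (-1)^(i-j) * real (m choose n) * real (i choose (i-j-n)) * y^j / (fact i * fact j))
       = (-1)^i * fact (i+m) / (fact i * fact i) * ((-1)^j * real (i choose j) * y^j / fact (j+m))"
proof -
  have "(\<Sum>n\<le>i-j. (m choose n) * (i choose (i-j-n))) = (m + i) choose (i-j)"
    using vandermonde[of m i "i-j"] by simp
  then have vandermonde_real:
    "(\<Sum>n\<le>i-j. real (m choose n) * real (i choose (i-j-n))) = fact (i+m) / (fact (i-j) * fact (j+m))"
    using binomial_fact[of "i-j" "m+i", where 'a=real] assms
    by (simp add: algebra_simps flip: of_nat_mult of_nat_sum)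
  have binom: "real (i choose j) = fact i / (fact j * fact (i-j))"
    using binomial_fact[of j i, where 'a=real] assms by simp
  have sign: "(-1::real)^(i-j) = (-1)^i * (-1)^j"
    using assms by (cases "even j") (simp_all add: power_diff)
  have "(\<Sum>n\<le>i-j. (-1)^(i-j) * real (m choose n) * real (i choose (i-j-n)) * y^j / (fact i * fact j))
      = (-1)^(i-j) * y^j / (fact i * fact j) * (\<Sum>n\<le>i-j. real (m choose n) * real (i choose (i-j-n)))"
    by (simp add: sum_distrib_left field_simps)
  then show ?thesis
    unfolding vandermonde_real binom sign by (simp add: field_simps)
qed

lemma laguerre_bessel_convolution:
  fixes y :: real and m i :: nat
  shows "(\<Sum>k\<le>i. (-1)^k / fact k * (\<Sum>n\<le>m. (-1)^n * real (m choose n) * bessel_coeff y n (i-k)))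
       = (-1)^i * fact (i+m) / (fact i * fact i) * scaled_laguerre m i y"
proof -
  define G where "G k n = (-1)^k / fact k * ((-1)^n * real (m choose n) * bessel_coeff y n (i-k))" for k n
  define H where "H j n = (-1)^(i-j) * real (m choose n) * real (i choose (i-j-n)) * y^j / (fact i * fact j)" for j n
  define T where "T = (SIGMA k:{..i}. {..i-k})"
  have trim: "(\<Sum>n\<le>m. G k n) = (\<Sum>n\<le>i-k. G k n)" for k
  proof -
    have "(\<Sum>n\<le>m. G k n) = (\<Sum>n\<le>m+i. G k n)"
      by (rule sum.mono_neutral_left) (auto simp: G_def)
    also have "\<dots> = (\<Sum>n\<le>i-k. G k n)"
      by (rule sum.mono_neutral_right) (auto simp: G_def bessel_coeff_def)
    finally show ?thesis .
  qed
  have "(\<Sum>k\<le>i. (-1)^k / fact k * (\<Sum>n\<le>m. (-1)^n * real (m choose n) * bessel_coeff y n (i-k)))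
      = (\<Sum>k\<le>i. \<Sum>n\<le>m. G k n)"
    by (simp add: G_def sum_distrib_left)
  also have "\<dots> = (\<Sum>k\<le>i. \<Sum>n\<le>i-k. G k n)"
    by (simp only: trim)
  also have "\<dots> = (\<Sum>(k,n)\<in>T. G k n)"
    unfolding T_def by (rule sum.Sigma) auto
  also have "\<dots> = (\<Sum>(j,n)\<in>T. H j n)"
  proof (rule sym, rule sum.reindex_bij_witness[where i="\<lambda>(j,n). (i-j-n, n)" and j="\<lambda>(j,n). (i-j-n, n)"])
    fix a assume "a \<in> T"
    then obtain j n where a: "a = (j,n)" and le: "j + n \<le> i" by (auto simp: T_def)
    have binom: "real (i choose (i-j-n)) = fact i / (fact (i-j-n) * fact (j+n))"
      using binomial_fact[of "i-j-n" i, where 'a=real] le by (simp add: algebra_simps)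
    have sign: "(-1::real)^(i-j-n) * (-1)^n = (-1)^(i-j)"
      using le by (simp flip: power_add)
    have "G (i-j-n) n = (-1)^(i-j-n) * (-1)^n * real (m choose n) * y^j / (fact (i-j-n) * fact j * fact (j+n))"
      unfolding G_def bessel_coeff_def using le by (simp add: algebra_simps)
    also have "\<dots> = H j n"
      unfolding H_def binom sign by (simp add: field_simps)
    finally show "(case (case a of (j, n) \<Rightarrow> (i-j-n, n)) of (k, n) \<Rightarrow> G k n) = (case a of (j, n) \<Rightarrow> H j n)"
      by (simp add: a)
  qed (auto simp: T_def)
  also have "\<dots> = (\<Sum>j\<le>i. \<Sum>n\<le>i-j. H j n)"
    unfolding T_def by (rule sum.Sigma[symmetric]) auto
  also have "\<dots> = (\<Sum>j\<le>i. (-1)^i * fact (i+m) / (fact i * fact i) * ((-1)^j * real (i choose j) * y^j / fact (j+m)))"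
    unfolding H_def by (intro sum.cong refl laguerre_vandermonde_step) simp
  also have "\<dots> = (-1)^i * fact (i+m) / (fact i * fact i) * scaled_laguerre m i y"
    unfolding scaled_laguerre_def by (simp add: sum_distrib_left)
  finally show ?thesis .
qed

lemma laguerre_bessel_sums:
  fixes x y :: real and m :: nat
  shows "(\<lambda>i. (-x)^i * fact (i+m) / (fact i * fact i) * scaled_laguerre m i y) sums
           (exp (-x) * (\<Sum>n\<le>m. (-1)^n * real (m choose n) * bessel_series y n x))"
proof -
  define q where "q N = (\<Sum>n\<le>m. (-1)^n * real (m choose n) * bessel_coeff y n N)" for N
  define a where "a k = (-x)^k / fact k" for k
  define b where "b N = q N * x^N" for N
  have b_sum: "b N = (\<Sum>n\<le>m. (-1)^n * real (m choose n) * (bessel_coeff y n N * x^N))" for N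
    unfolding b_def q_def by (simp add: sum_distrib_right mult.assoc)
  have "summable (\<lambda>k. norm (a k))"
    unfolding a_def using summable_exp_scaled[of 1 "\<bar>x\<bar>"] by (simp add: power_abs)
  moreover have "summable (\<lambda>N. norm (b N))"
  proof (rule summable_comparison_test)
    show "summable (\<lambda>N. \<Sum>n\<le>m. real (m choose n) * \<bar>bessel_coeff y n N * x^N\<bar>)"
      by (intro summable_sum summable_mult summable_abs_bessel_coeff)
    show "\<exists>N0. \<forall>N\<ge>N0. norm (norm (b N)) \<le> (\<Sum>n\<le>m. real (m choose n) * \<bar>bessel_coeff y n N * x^N\<bar>)"
      unfolding b_sum real_norm_def abs_abs by (intro exI allI impI order.trans[OF sum_abs]) (simp add: abs_mult)
  qed
  ultimately have "(\<lambda>k. \<Sum>l\<le>k. a l * b (k - l)) sums ((\<Sum>k. a k) * (\<Sum>k. b k))"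
    by (rule Cauchy_product_sums)
  moreover have "(\<Sum>k. a k) = exp (-x)"
    unfolding a_def using exp_sums_real[of "-x"] by (simp add: sums_iff)
  moreover have "(\<Sum>k. b k) = (\<Sum>n\<le>m. (-1)^n * real (m choose n) * bessel_series y n x)"
    unfolding b_sum bessel_series_def
    by (subst suminf_sum) (auto intro!: summable_mult summable_bessel_coeff sum.cong suminf_mult)
  moreover have "(\<Sum>l\<le>k. a l * b (k - l)) = (-x)^k * fact (k+m) / (fact k * fact k) * scaled_laguerre m k y" for k
  proof -
    have "(\<Sum>l\<le>k. a l * b (k - l)) = x^k * (\<Sum>l\<le>k. (-1)^l / fact l * q (k-l))"
      unfolding sum_distrib_left
    proof (rule sum.cong[OF refl])
      fix l assume "l \<in> {..k}"
      then have "x^k = x^l * x^(k-l)" by (simp flip: power_add)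
      then show "a l * b (k - l) = x^k * ((-1)^l / fact l * q (k-l))"
        unfolding a_def b_def by (simp add: power_minus' field_simps)
    qed
    also have "\<dots> = x^k * ((-1)^k * fact (k+m) / (fact k * fact k) * scaled_laguerre m k y)"
      unfolding q_def by (simp only: laguerre_bessel_convolution)
    finally show ?thesis by (simp add: power_minus')
  qed
  ultimately show ?thesis by simp
qed

lemma abs_power_even_add: "\<bar>x^(2*j+m)\<bar> = \<bar>x\<bar>^m * (x^2)^j" for x :: real
  by (simp add: power_add power_mult abs_mult power_abs power2_abs flip: power_mult_distrib)

lemma summable_abs_bessel_terms:
  fixes z :: real
  shows "summable (\<lambda>j. \<bar>1 / (fact j * fact (j + k)) * (z / 2) ^ (2 * j + k)\<bar>)"
proof (rule summable_comparison_test[OF _ summable_exp_scaled[of "\<bar>z/2\<bar>^k" "(z/2)^2"]])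
  have "\<bar>1 / (fact j * fact (j + k)) * (z / 2) ^ (2 * j + k)\<bar> = \<bar>z/2\<bar>^k * ((z / 2)^2) ^ j / (fact j * fact (j+k))" for j
    by (simp add: abs_mult abs_power_even_add)
  also have "\<dots> j \<le> \<bar>z/2\<bar>^k * ((z / 2)^2) ^ j / fact j" for j
    by (rule divide_left_mono) (auto simp: fact_ge_1)
  finally show "\<exists>N. \<forall>j\<ge>N. norm \<bar>1 / (fact j * fact (j + k)) * (z / 2) ^ (2 * j + k)\<bar> \<le> \<bar>z/2\<bar>^k * ((z / 2)^2) ^ j / fact j"
    by auto
qed

lemma besselI_sums: "(\<lambda>j. 1 / (fact j * fact (j + k)) * (z / 2) ^ (2 * j + k)) sums besselI k z"
  unfolding besselI_def by (rule summable_sums[OF summable_rabs_cancel[OF summable_abs_bessel_terms]])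

lemma besselJ_sums: "(\<lambda>j. (-1) ^ j / (fact j * fact (j + k)) * (z / 2) ^ (2 * j + k)) sums besselJ k z"
proof -
  have "summable (\<lambda>j. \<bar>(-1) ^ j / (fact j * fact (j + k)) * (z / 2) ^ (2 * j + k)\<bar>)"
    using summable_abs_bessel_terms[of k z] by (simp add: abs_mult)
  then show ?thesis unfolding besselJ_def by (rule summable_sums[OF summable_rabs_cancel])
qed

definition besselJ_coeff :: "real \<Rightarrow> nat \<Rightarrow> nat \<Rightarrow> real" where
  "besselJ_coeff b m j = (-1)^j * (b/2)^(2*j+m) / (fact j * fact (j+m))"

lemma abs_besselJ_coeff:
  "\<bar>besselJ_coeff b m j\<bar> * fact (j+m) = \<bar>b/2\<bar>^m * ((b/2)^2)^j / fact j"
  by (simp add: besselJ_coeff_def abs_mult abs_power_even_add)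

lemma sqrt_power_eq_powr: "x > 0 \<Longrightarrow> sqrt x ^ m = x powr (real m / 2)"
  using powr_power[of x "1/2" m] by (simp add: powr_half_sqrt)

lemma besselJ_sqrt_sums:
  assumes "x > 0"
  shows "(\<lambda>j. besselJ_coeff b m j * x^(j+m)) sums (besselJ m (b * sqrt x) * x powr (real m / 2))"
proof -
  have "(-1) ^ j / (fact j * fact (j + m)) * (b * sqrt x / 2) ^ (2 * j + m) * x powr (real m / 2)
      = besselJ_coeff b m j * x^(j+m)" for j
  proof -
    have "x powr (real m / 2) * x powr (real m / 2) = x^m"
      using assms by (simp flip: powr_add powr_realpow)
    then have "sqrt x ^ (2*j+m) * x powr (real m / 2) = x^(j+m)"
      using assms by (simp add: power_add power_mult sqrt_power_eq_powr)
    then show ?thesis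
      unfolding besselJ_coeff_def power_mult_distrib times_divide_eq_left[symmetric] by simp
  qed
  with sums_mult2[OF besselJ_sums[of m "b * sqrt x"], of "x powr (real m / 2)"] show ?thesis
    by simp
qed

lemma bessel_series_square:
  fixes s t :: real
  assumes "t \<noteq> 0"
  shows "bessel_series (t^2) n (s^2) = (s/t)^n * besselI n (2 * s * t)"
proof -
  have "(s/t)^n * (1 / (fact j * fact (j + n)) * (2 * s * t / 2) ^ (2 * j + n))
      = (t^2)^j * (s^2)^(j+n) / (fact j * fact (j+n))" for j
  proof -
    have "(s/t)^n * (s * t)^n = (s^2)^n"
      using assms by (simp add: power2_eq_square flip: power_mult_distrib)
    then have "(s/t)^n * (s * t) ^ (2 * j + n) = (t^2)^j * (s^2)^(j+n)"
      by (simp add: power_add power_mult power_mult_distrib)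
    then show ?thesis by simp
  qed
  then have "(\<lambda>j. (s/t)^n * (1 / (fact j * fact (j + n)) * (2 * s * t / 2) ^ (2 * j + n)))
      sums bessel_series (t^2) n (s^2)"
    using bessel_series_sums[of "t^2" "s^2" n] by simp
  then show ?thesis
    using sums_mult[OF besselI_sums] sums_unique2 by blast
qed

lemma besselI_eq_bessel_series:
  fixes a b \<alpha> :: real
  assumes "\<alpha> > 0" "b \<noteq> 0"
  shows "(a/b)^n * besselI n (a * b / (2*\<alpha>)) = bessel_series (b^2/(4*\<alpha>)) n (a^2/(4*\<alpha>))"
proof -
  have square: "bessel_series ((b/(2 * sqrt \<alpha>))^2) n ((a/(2 * sqrt \<alpha>))^2)
      = (a/(2 * sqrt \<alpha>) / (b/(2 * sqrt \<alpha>)))^n * besselI n (2 * (a/(2 * sqrt \<alpha>)) * (b/(2 * sqrt \<alpha>)))"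
    using assms by (intro bessel_series_square) simp
  have scaling: "(b/(2 * sqrt \<alpha>))^2 = b^2/(4*\<alpha>)" "(a/(2 * sqrt \<alpha>))^2 = a^2/(4*\<alpha>)"
    "a/(2 * sqrt \<alpha>) / (b/(2 * sqrt \<alpha>)) = a/b" "2 * (a/(2 * sqrt \<alpha>)) * (b/(2 * sqrt \<alpha>)) = a * b / (2*\<alpha>)"
    using assms by (simp_all add: power_divide)
  show ?thesis
    using square unfolding scaling by (rule sym)
qed

lemma besselI_kernel_eq_bessel_series:
  fixes b \<alpha> x :: real
  assumes "\<alpha> > 0" "b \<noteq> 0" "x > 0"
  shows "(x/\<alpha>) powr (real m / 2) * besselI m (b * sqrt (x/\<alpha>)) = (b/(2*\<alpha>))^m * bessel_series (b^2/(4*\<alpha>)) m x"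
proof -
  have square: "bessel_series ((b/(2 * sqrt \<alpha>))^2) m (sqrt x ^ 2)
      = (sqrt x / (b/(2 * sqrt \<alpha>)))^m * besselI m (2 * sqrt x * (b/(2 * sqrt \<alpha>)))"
    using assms by (intro bessel_series_square) simp
  have scaling: "(b/(2 * sqrt \<alpha>))^2 = b^2/(4*\<alpha>)" "sqrt x ^ 2 = x"
      "2 * sqrt x * (b/(2 * sqrt \<alpha>)) = b * sqrt (x/\<alpha>)"
    using assms by (simp_all add: power_divide real_sqrt_divide)
  have "sqrt (x/\<alpha>) = b/(2*\<alpha>) * (sqrt x / (b/(2 * sqrt \<alpha>)))"
    using assms by (simp add: real_sqrt_divide field_simps)
  then have "(x/\<alpha>) powr (real m / 2) = (b/(2*\<alpha>))^m * (sqrt x / (b/(2 * sqrt \<alpha>)))^m"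
    using assms by (simp flip: sqrt_power_eq_powr power_mult_distrib)
  then show ?thesis
    using square unfolding scaling by simp
qed

lemma higher_deriv_besselI_kernel:
  fixes b \<alpha> x :: real
  assumes "\<alpha> > 0" "b \<noteq> 0" "x > 0"
  shows "(deriv ^^ m) (\<lambda>x. exp (-x) * (x/\<alpha>) powr (real m / 2) * besselI m (b * sqrt (x/\<alpha>))) x
       = (b/(2*\<alpha>))^m * exp (-x) * (\<Sum>n\<le>m. (-1)^n * real (m choose n) * bessel_series (b^2/(4*\<alpha>)) n x)"
proof -
  have "exp (-t) * (t/\<alpha>) powr (real m / 2) * besselI m (b * sqrt (t/\<alpha>))
      = (b/(2*\<alpha>))^m * exp (-t) * bessel_series (b^2/(4*\<alpha>)) m t" if "t > 0" for t
    by (subst mult.assoc, subst besselI_kernel_eq_bessel_series[OF assms(1,2) that]) (simp add: mult_ac)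
  moreover have "eventually (\<lambda>t. t > 0) (nhds x)"
    using eventually_nhds_in_open[OF open_greaterThan, of x 0] assms(3) by simp
  ultimately have "eventually (\<lambda>t. exp (-t) * (t/\<alpha>) powr (real m / 2) * besselI m (b * sqrt (t/\<alpha>))
      = (b/(2*\<alpha>))^m * exp (-t) * bessel_series (b^2/(4*\<alpha>)) m t) (nhds x)"
    by (auto elim!: eventually_mono)
  then have "(deriv ^^ m) (\<lambda>x. exp (-x) * (x/\<alpha>) powr (real m / 2) * besselI m (b * sqrt (x/\<alpha>))) x
      = (deriv ^^ m) (\<lambda>x. (b/(2*\<alpha>))^m * exp (-x) * bessel_series (b^2/(4*\<alpha>)) m x) x"
    by (rule higher_deriv_cong_ev) simp
  then show ?thesis
    using higher_deriv_exp_bessel_series[of m m "(b/(2*\<alpha>))^m" "b^2/(4*\<alpha>)"] by (simp add: mult_ac)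
qed

section \<open>Laplace transforms of Bessel-type power series\<close>

lemma has_bochner_integral_power_exp:
  fixes \<alpha> :: real
  assumes "\<alpha> > 0"
  shows "has_bochner_integral lborel (\<lambda>x. indicator {0<..} x * (x^n * exp (-\<alpha>*x))) (fact n / \<alpha>^Suc n)"
proof (rule has_bochner_integral_nn_integral)
  have "(\<integral>\<^sup>+x. ennreal (indicator {0<..} x * (x^n * exp (-\<alpha>*x))) \<partial>lborel)
      = (\<integral>\<^sup>+x. ennreal (1/\<alpha>) * ennreal (erlang_density 0 \<alpha> x * x^n) \<partial>lborel)"
    using AE_lborel_singleton[of 0]
    by (intro nn_integral_cong_AE, eventually_elim)
       (use assms in \<open>auto simp: erlang_density_def indicator_def field_simps simp flip: ennreal_mult'\<close>)
  also have "\<dots> = ennreal (1/\<alpha>) * (\<integral>\<^sup>+x. ennreal (erlang_density 0 \<alpha> x * x^n) \<partial>lborel)"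
    by (rule nn_integral_cmult) auto
  also have "\<dots> = ennreal (fact n / \<alpha>^Suc n)"
    using nn_integral_erlang_ith_moment[OF assms, of 0 n] assms
    by (simp add: divide_ennreal field_simps flip: ennreal_mult')
  finally show "(\<integral>\<^sup>+x. ennreal (indicator {0<..} x * (x^n * exp (-\<alpha>*x))) \<partial>lborel) = ennreal (fact n / \<alpha>^Suc n)" .
qed (use assms in \<open>auto simp: indicator_def\<close>)

lemma fact_add_le_pow2: "fact (a+b) \<le> (2::real)^(a+b) * fact a * fact b"
proof -
  have "fact (a+b) \<le> (fact a * fact b * 2^(a+b) :: nat)"
    using binomial_fact_lemma[of a "a+b"] binomial_le_pow2[of "a+b" a]
    by (metis add_diff_cancel_left' le_add1 mult_le_mono2)
  then have "(fact (a+b)::real) \<le> of_nat (fact a * fact b * 2^(a+b))"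
    by (metis of_nat_fact of_nat_le_iff)
  then show ?thesis by (simp add: algebra_simps)
qed

(* Bounds |c_j| (j+p)! <= C R^j / j!, as satisfied by the coefficients of x^(p/2) J_p(b sqrt x),
   are called Bessel type here: they make all the Laplace integrals below absolutely convergent. *)
lemma summable_abs_bessel_type_series:
  fixes c :: "nat \<Rightarrow> real"
  assumes bound: "\<And>j. \<bar>c j\<bar> * fact (j+p) \<le> C * R^j / fact j"
  shows "summable (\<lambda>j. \<bar>c j * x^(j+p)\<bar>)"
proof (rule summable_comparison_test[OF _ summable_exp_scaled[of "C*\<bar>x\<bar>^p" "R*\<bar>x\<bar>"]])
  have "\<bar>c j * x^(j+p)\<bar> \<le> C * R^j / fact j * \<bar>x\<bar>^(j+p)" for j
  proof -
    have "\<bar>c j\<bar> \<le> \<bar>c j\<bar> * fact (j+p)"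
      using fact_ge_1[of "j+p", where 'a=real] by (simp add: mult_le_cancel_left1)
    then show ?thesis
      unfolding abs_mult power_abs using bound[of j] by (intro mult_right_mono) auto
  qed
  then show "\<exists>N. \<forall>j\<ge>N. norm \<bar>c j * x^(j+p)\<bar> \<le> C * \<bar>x\<bar>^p * (R * \<bar>x\<bar>)^j / fact j"
    by (simp add: power_add power_mult_distrib field_simps)
qed

lemma laplace_bessel_type_term_le:
  fixes c :: "nat \<Rightarrow> real" and \<alpha> :: real
  assumes "\<alpha> > 0" and bound: "\<And>j. \<bar>c j\<bar> * fact (j+p) \<le> C * R^j / fact j"
  shows "\<bar>c j\<bar> * (fact (i+j+p) / \<alpha>^Suc (i+j+p))
           \<le> C * 2^(i+p) * fact i / \<alpha>^Suc (i+p) * ((2*R/\<alpha>)^j / fact j)"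
proof -
  have "\<bar>c j\<bar> * (fact (i+j+p) / \<alpha>^Suc (i+j+p))
      \<le> \<bar>c j\<bar> * (2^(i+(j+p)) * fact i * fact (j+p)) / \<alpha>^Suc (i+j+p)"
    using fact_add_le_pow2[of i "j+p"] assms(1)
    by (simp add: add.assoc divide_right_mono mult_left_mono)
  also have "\<dots> = (\<bar>c j\<bar> * fact (j+p)) * (2^(i+(j+p)) * fact i / \<alpha>^Suc (i+j+p))"
    by simp
  also have "\<dots> \<le> (C * R^j / fact j) * (2^(i+(j+p)) * fact i / \<alpha>^Suc (i+j+p))"
    by (rule mult_right_mono[OF bound]) (use assms(1) in auto)
  also have "\<dots> = C * 2^(i+p) * fact i / \<alpha>^Suc (i+p) * ((2*R/\<alpha>)^j / fact j)"
    by (simp add: power_add power_divide power_mult_distrib mult_ac)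
  finally show ?thesis .
qed

lemma laplace_bessel_type_series:
  fixes c :: "nat \<Rightarrow> real" and \<alpha> :: real
  assumes \<alpha>: "\<alpha> > 0" and bound: "\<And>j. \<bar>c j\<bar> * fact (j+p) \<le> C * R^j / fact j"
  shows "integrable lborel (\<lambda>x. indicator {0<..} x * (x^i * exp (-\<alpha>*x) * (\<Sum>j. c j * x^(j+p))))"
    and "(\<lambda>j. c j * (fact (i+j+p) / \<alpha>^Suc (i+j+p))) sums
           integral\<^sup>L lborel (\<lambda>x. indicator {0<..} x * (x^i * exp (-\<alpha>*x) * (\<Sum>j. c j * x^(j+p))))"
proof -
  let ?F = "\<lambda>x. indicator {0<..} x * (x^i * exp (-\<alpha>*x) * (\<Sum>j. c j * x^(j+p)))"
  define f where "f j x = c j * (indicator {0<..} x * (x^(i+j+p) * exp (-\<alpha>*x)))" for j and x :: real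
  have F_eq: "?F = (\<lambda>x. \<Sum>j. f j x)"
  proof
    fix x :: real
    have "(\<Sum>j. f j x) = (\<Sum>j. (indicator {0<..} x * (x^i * exp (-\<alpha>*x))) * (c j * x^(j+p)))"
      unfolding f_def by (simp add: power_add algebra_simps)
    also have "\<dots> = indicator {0<..} x * (x^i * exp (-\<alpha>*x)) * (\<Sum>j. c j * x^(j+p))"
      by (rule suminf_mult[OF summable_rabs_cancel[OF summable_abs_bessel_type_series[OF bound]]])
    finally show "?F x = (\<Sum>j. f j x)"
      by simp
  qed
  have f_int: "has_bochner_integral lborel (f j) (c j * (fact (i+j+p) / \<alpha>^Suc (i+j+p)))" for j
    unfolding f_def by (intro has_bochner_integral_mult_right has_bochner_integral_power_exp \<alpha>)
  have f_abs_int: "integral\<^sup>L lborel (\<lambda>x. norm (f j x)) = \<bar>c j\<bar> * (fact (i+j+p) / \<alpha>^Suc (i+j+p))" for j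
  proof -
    have "norm (f j x) = \<bar>c j\<bar> * (indicator {0<..} x * (x^(i+j+p) * exp (-\<alpha>*x)))" for x
      unfolding f_def by (auto simp: abs_mult indicator_def)
    then show ?thesis
      using has_bochner_integral_power_exp[OF \<alpha>, of "i+j+p"] by (simp add: has_bochner_integral_integral_eq)
  qed
  have f_summable: "AE x in lborel. summable (\<lambda>j. norm (f j x))"
  proof (rule AE_I2)
    fix x :: real
    have "norm (f j x) = (indicator {0<..} x * (x^i * exp (-\<alpha>*x))) * \<bar>c j * x^(j+p)\<bar>" for j
      unfolding f_def by (auto simp: indicator_def abs_mult power_add)
    then show "summable (\<lambda>j. norm (f j x))"
      using summable_mult[OF summable_abs_bessel_type_series[OF bound]] by presburger
  qed
  have f_integrals_summable: "summable (\<lambda>j. integral\<^sup>L lborel (\<lambda>x. norm (f j x)))"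
    unfolding f_abs_int
    by (rule summable_comparison_test[OF _ summable_exp_scaled[of "C * 2^(i+p) * fact i / \<alpha>^Suc (i+p)" "2*R/\<alpha>"]])
       (use laplace_bessel_type_term_le[OF \<alpha> bound] \<alpha> in \<open>auto simp: abs_mult\<close>)
  note f_integrable = integrable.intros[OF f_int]
  show "integrable lborel ?F"
    unfolding F_eq by (rule integrable_suminf[OF f_integrable f_summable f_integrals_summable])
  show "(\<lambda>j. c j * (fact (i+j+p) / \<alpha>^Suc (i+j+p))) sums integral\<^sup>L lborel ?F"
    unfolding F_eq has_bochner_integral_integral_eq[OF f_int, symmetric]
    by (rule sums_integral[OF f_integrable f_summable f_integrals_summable])
qed

lemma laplace_bessel_type_series_abs:
  fixes c :: "nat \<Rightarrow> real" and \<alpha> :: real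
  assumes \<alpha>: "\<alpha> > 0" and bound: "\<And>j. \<bar>c j\<bar> * fact (j+p) \<le> C * R^j / fact j"
  shows "integrable lborel (\<lambda>x. indicator {0<..} x * (x^i * exp (-\<alpha>*x) * \<bar>\<Sum>j. c j * x^(j+p)\<bar>))"
    and "integral\<^sup>L lborel (\<lambda>x. indicator {0<..} x * (x^i * exp (-\<alpha>*x) * \<bar>\<Sum>j. c j * x^(j+p)\<bar>))
           \<le> C * 2^(i+p) * fact i / \<alpha>^Suc (i+p) * exp (2*R/\<alpha>)"
proof -
  let ?F = "\<lambda>x. indicator {0<..} x * (x^i * exp (-\<alpha>*x) * \<bar>\<Sum>j. c j * x^(j+p)\<bar>)"
  let ?G = "\<lambda>x. indicator {0<..} x * (x^i * exp (-\<alpha>*x) * (\<Sum>j. \<bar>c j\<bar> * x^(j+p)))"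
  have abs_bound: "\<bar>\<bar>c j\<bar>\<bar> * fact (j+p) \<le> C * R^j / fact j" for j
    using bound by simp
  have "?F = (\<lambda>x. norm (indicator {0<..} x * (x^i * exp (-\<alpha>*x) * (\<Sum>j. c j * x^(j+p)))))"
    by (auto simp: abs_mult indicator_def)
  then show F_int: "integrable lborel ?F"
    using integrable_norm[OF laplace_bessel_type_series(1)[OF \<alpha> bound]] by simp
  have "integral\<^sup>L lborel ?F \<le> integral\<^sup>L lborel ?G"
  proof (rule integral_mono[OF F_int laplace_bessel_type_series(1)[OF \<alpha> abs_bound]])
    fix x :: real
    have "\<bar>\<Sum>j. c j * x^(j+p)\<bar> \<le> (\<Sum>j. \<bar>c j * x^(j+p)\<bar>)"
      by (rule summable_rabs[OF summable_abs_bessel_type_series[OF bound]])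
    then show "?F x \<le> ?G x"
      by (cases "x > 0") (auto simp: abs_mult intro!: mult_left_mono)
  qed
  also have "\<dots> \<le> C * 2^(i+p) * fact i / \<alpha>^Suc (i+p) * exp (2*R/\<alpha>)"
    by (rule sums_le[OF _ laplace_bessel_type_series(2)[OF \<alpha> abs_bound] sums_mult[OF exp_sums_real]])
       (use laplace_bessel_type_term_le[OF \<alpha> bound] in simp)
  finally show "integral\<^sup>L lborel ?F \<le> C * 2^(i+p) * fact i / \<alpha>^Suc (i+p) * exp (2*R/\<alpha>)" .
qed

lemma summable_integral_abs_laplace_product:
  fixes a b :: "nat \<Rightarrow> real" and \<alpha> :: real
  assumes \<alpha>: "\<alpha> > 0"
    and a_bound: "\<And>i. \<bar>a i\<bar> * fact i \<le> A * Q^i / fact i"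
    and b_bound: "\<And>j. \<bar>b j\<bar> * fact (j+p) \<le> B * R^j / fact j"
  shows "summable (\<lambda>i. \<bar>a i\<bar> *
           integral\<^sup>L lborel (\<lambda>x. indicator {0<..} x * (x^i * exp (-\<alpha>*x) * \<bar>\<Sum>j. b j * x^(j+p)\<bar>)))"
    (is "summable (\<lambda>i. \<bar>a i\<bar> * ?I i)")
proof (rule summable_comparison_test[OF _ summable_exp_scaled[of "A * B * 2^p * exp (2*R/\<alpha>) / \<alpha>^Suc p" "2*Q/\<alpha>"]])
  have B: "B \<ge> 0"
    using order.trans[OF _ b_bound[of 0]] by simp
  have "\<bar>a i\<bar> * ?I i \<le> A * B * 2^p * exp (2*R/\<alpha>) / \<alpha>^Suc p * (2*Q/\<alpha>)^i / fact i" for i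
  proof -
    have "\<bar>a i\<bar> * ?I i \<le> \<bar>a i\<bar> * (B * 2^(i+p) * fact i / \<alpha>^Suc (i+p) * exp (2*R/\<alpha>))"
      using laplace_bessel_type_series_abs(2)[OF \<alpha> b_bound] by (intro mult_left_mono) auto
    also have "\<dots> \<le> A * B * 2^p * exp (2*R/\<alpha>) / \<alpha>^Suc p * (2*Q/\<alpha>)^i / fact i"
      using mult_right_mono[OF a_bound[of i], of "B * 2^(i+p) * exp (2*R/\<alpha>) / \<alpha>^Suc (i+p)"] \<alpha> B
      by (simp add: power_add power_divide mult_ac)
    finally show ?thesis .
  qed
  moreover have "?I i \<ge> 0" for i
    by (intro integral_nonneg_AE AE_I2) (auto simp: indicator_def)
  ultimately show "\<exists>N. \<forall>i\<ge>N. norm (\<bar>a i\<bar> * ?I i)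
      \<le> A * B * 2^p * exp (2*R/\<alpha>) / \<alpha>^Suc p * (2*Q/\<alpha>)^i / fact i"
    by (simp add: abs_mult)
qed

lemma has_integral_laplace_bessel_type_product:
  fixes a b s :: "nat \<Rightarrow> real" and \<alpha> L :: real
  assumes \<alpha>: "\<alpha> > 0"
    and a_bound: "\<And>i. \<bar>a i\<bar> * fact i \<le> A * Q^i / fact i"
    and b_bound: "\<And>j. \<bar>b j\<bar> * fact (j+p) \<le> B * R^j / fact j"
    and inner: "\<And>i. (\<lambda>j. b j * (fact (i+j+p) / \<alpha>^Suc (i+j+p))) sums s i"
    and outer: "(\<lambda>i. a i * s i) sums L"
  shows "((\<lambda>x. exp (-\<alpha>*x) * (\<Sum>i. a i * x^i) * (\<Sum>j. b j * x^(j+p))) has_integral L) {0<..}"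
proof -
  define f where "f i x = a i * (indicator {0<..} x * (x^i * exp (-\<alpha>*x) * (\<Sum>j. b j * x^(j+p))))"
    for i and x :: real
  have a_bound': "\<bar>a i\<bar> * fact (i+0) \<le> A * Q^i / fact i" for i
    using a_bound by simp
  note f_laplace = laplace_bessel_type_series[OF \<alpha> b_bound]
  have f_int: "integrable lborel (f i)" for i
    unfolding f_def by (intro integrable_mult_right f_laplace(1))
  have f_summable: "AE x in lborel. summable (\<lambda>i. norm (f i x))"
  proof (rule AE_I2)
    fix x :: real
    have "norm (f i x) = \<bar>a i * x^(i+0)\<bar> * (indicator {0<..} x * (exp (-\<alpha>*x) * \<bar>\<Sum>j. b j * x^(j+p)\<bar>))" for i
      unfolding f_def by (auto simp: abs_mult indicator_def)
    then show "summable (\<lambda>i. norm (f i x))"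
      using summable_mult2[OF summable_abs_bessel_type_series[OF a_bound']] by presburger
  qed
  have "integral\<^sup>L lborel (\<lambda>x. norm (f i x))
      = \<bar>a i\<bar> * integral\<^sup>L lborel (\<lambda>x. indicator {0<..} x * (x^i * exp (-\<alpha>*x) * \<bar>\<Sum>j. b j * x^(j+p)\<bar>))" for i
  proof -
    have "(\<lambda>x. norm (f i x)) = (\<lambda>x. \<bar>a i\<bar> * (indicator {0<..} x * (x^i * exp (-\<alpha>*x) * \<bar>\<Sum>j. b j * x^(j+p)\<bar>)))"
      unfolding f_def by (auto simp: abs_mult indicator_def)
    then show ?thesis by simp
  qed
  then have "summable (\<lambda>i. integral\<^sup>L lborel (\<lambda>x. norm (f i x)))"
    using summable_integral_abs_laplace_product[OF \<alpha> a_bound b_bound] by simp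
  note termwise = integrable_suminf[OF f_int f_summable this] sums_integral[OF f_int f_summable this]
  have "integral\<^sup>L lborel (f i) = a i * s i" for i
    unfolding f_def using sums_unique2[OF f_laplace(2) inner] by simp
  then have "integral\<^sup>L lborel (\<lambda>x. \<Sum>i. f i x) = L"
    using termwise(2) outer sums_unique2 by simp
  moreover have "(\<lambda>x. \<Sum>i. f i x) = (\<lambda>x. if x \<in> {0<..} then exp (-\<alpha>*x) * (\<Sum>i. a i * x^i) * (\<Sum>j. b j * x^(j+p)) else 0)"
  proof
    fix x :: real
    have "(\<Sum>i. f i x) = (\<Sum>i. a i * x^i) * (indicator {0<..} x * (exp (-\<alpha>*x) * (\<Sum>j. b j * x^(j+p))))"
      unfolding f_def using summable_rabs_cancel[OF summable_abs_bessel_type_series[OF a_bound', of x]]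
      by (subst suminf_mult2) (simp_all add: mult_ac)
    then show "(\<Sum>i. f i x) = (if x \<in> {0<..} then exp (-\<alpha>*x) * (\<Sum>i. a i * x^i) * (\<Sum>j. b j * x^(j+p)) else 0)"
      by (simp add: mult_ac)
  qed
  ultimately have "((\<lambda>x. if x \<in> {0<..} then exp (-\<alpha>*x) * (\<Sum>i. a i * x^i) * (\<Sum>j. b j * x^(j+p)) else 0)
      has_integral L) UNIV"
    using has_integral_integral_lborel[OF termwise(1)] by metis
  then show ?thesis
    by (rule has_integral_restrict_UNIV[THEN iffD1])
qed

lemma besselJ_moment_sums:
  fixes b \<alpha> :: real
  assumes "\<alpha> > 0"
  shows "(\<lambda>j. besselJ_coeff b m j * (fact (i+j+m) / \<alpha>^Suc (i+j+m))) sums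
           ((b/(2*\<alpha>))^m * exp (-(b^2/(4*\<alpha>))) / \<alpha>^Suc i * fact (i+m) * scaled_laguerre m i (b^2/(4*\<alpha>)))"
proof -
  have "besselJ_coeff b m j * (fact (i+j+m) / \<alpha>^Suc (i+j+m))
      = (b/(2*\<alpha>))^m / \<alpha>^Suc i * ((-(b^2/(4*\<alpha>)))^j * fact (i+j+m) / (fact j * fact (j+m)))" for j
  proof -
    have "(4::real)^j = 2^j * 2^j"
      by (simp flip: power_mult_distrib)
    then show ?thesis
      using assms by (simp add: besselJ_coeff_def power_add power_mult power_divide power_mult_distrib
          power2_eq_square power_minus' field_simps)
  qed
  then show ?thesis
    using sums_mult[OF kummer_transformation_sums[of "b^2/(4*\<alpha>)" i m], of "(b/(2*\<alpha>))^m / \<alpha>^Suc i"]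
    by (simp add: field_simps)
qed

lemma besselJ0_laguerre_sums:
  fixes a y C \<alpha> :: real
  assumes "\<alpha> > 0"
  shows "(\<lambda>i. besselJ_coeff a 0 i * (C / \<alpha>^Suc i * fact (i+m) * scaled_laguerre m i y)) sums
           (C / \<alpha> * exp (-(a^2/(4*\<alpha>))) * (\<Sum>n\<le>m. (-1)^n * real (m choose n) * bessel_series y n (a^2/(4*\<alpha>))))"
proof -
  have "besselJ_coeff a 0 i * (C / \<alpha>^Suc i * fact (i+m) * scaled_laguerre m i y)
      = C / \<alpha> * ((-(a^2/(4*\<alpha>)))^i * fact (i+m) / (fact i * fact i) * scaled_laguerre m i y)" for i
  proof -
    have "(4::real)^i = 2^i * 2^i"
      by (simp flip: power_mult_distrib)
    then show ?thesis
      using assms by (simp add: besselJ_coeff_def power_mult power_divide power_mult_distrib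
          power2_eq_square power_minus' field_simps)
  qed
  then show ?thesis
    using sums_mult[OF laguerre_bessel_sums[of "a^2/(4*\<alpha>)" m y], of "C / \<alpha>"]
    by (simp add: mult_ac)
qed

lemma has_integral_besselJ0_besselJ:
  fixes a b \<alpha> :: real
  assumes "\<alpha> > 0"
  shows "((\<lambda>x. exp (-\<alpha>*x) * besselJ 0 (a * sqrt x) * besselJ m (b * sqrt x) * x powr (real m / 2))
          has_integral ((b/(2*\<alpha>))^m * exp (-(b^2/(4*\<alpha>))) / \<alpha> * exp (-(a^2/(4*\<alpha>)))
                        * (\<Sum>n\<le>m. (-1)^n * real (m choose n) * bessel_series (b^2/(4*\<alpha>)) n (a^2/(4*\<alpha>))))) {0<..}"
proof -
  have "((\<lambda>x. exp (-\<alpha>*x) * (\<Sum>i. besselJ_coeff a 0 i * x^i) * (\<Sum>j. besselJ_coeff b m j * x^(j+m)))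
          has_integral ((b/(2*\<alpha>))^m * exp (-(b^2/(4*\<alpha>))) / \<alpha> * exp (-(a^2/(4*\<alpha>)))
                        * (\<Sum>n\<le>m. (-1)^n * real (m choose n) * bessel_series (b^2/(4*\<alpha>)) n (a^2/(4*\<alpha>))))) {0<..}"
    using abs_besselJ_coeff[of a 0] abs_besselJ_coeff[of b m]
    by (intro has_integral_laplace_bessel_type_product[where A=1 and Q="(a/2)^2" and B="\<bar>b/2\<bar>^m" and R="(b/2)^2",
          OF assms _ _ besselJ_moment_sums[OF assms] besselJ0_laguerre_sums[OF assms]]) simp_all
  moreover have "exp (-\<alpha>*x) * (\<Sum>i. besselJ_coeff a 0 i * x^i) * (\<Sum>j. besselJ_coeff b m j * x^(j+m))
      = exp (-\<alpha>*x) * besselJ 0 (a * sqrt x) * besselJ m (b * sqrt x) * x powr (real m / 2)" if "x \<in> {0<..}" for x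
    using besselJ_sqrt_sums[of x a 0] besselJ_sqrt_sums[of x b m] that by (simp add: sums_iff)
  ultimately show ?thesis
    using has_integral_cong by (metis (no_types, lifting))
qed

theorem mainTheorem15:
  fixes m :: nat and \<alpha> \<beta>1 \<beta>2 :: real
  assumes "m \<ge> 1" and "\<alpha> > 0" and "\<beta>1 > 0" and "\<beta>2 > 0"
  shows "((\<lambda>x. exp (- \<alpha> * x) * besselJ 0 (\<beta>1 * sqrt x) * besselJ m (\<beta>2 * sqrt x)
              * x powr (real m / 2))
          has_integral
          (1 / \<alpha> * exp (- \<beta>2\<^sup>2 / (4 * \<alpha>)) *
           ((deriv ^^ m) (\<lambda>x. exp (- x) * (x / \<alpha>) powr (real m / 2)
                               * besselI m (\<beta>2 * sqrt (x / \<alpha>))) (\<beta>1\<^sup>2 / (4 * \<alpha>))))) {0<..}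
       \<and> 1 / \<alpha> * exp (- \<beta>2\<^sup>2 / (4 * \<alpha>)) *
           ((deriv ^^ m) (\<lambda>x. exp (- x) * (x / \<alpha>) powr (real m / 2)
                               * besselI m (\<beta>2 * sqrt (x / \<alpha>))) (\<beta>1\<^sup>2 / (4 * \<alpha>)))
         = 1 / \<alpha> * (\<beta>2 / (2 * \<alpha>)) ^ m * exp (- (\<beta>1\<^sup>2 + \<beta>2\<^sup>2) / (4 * \<alpha>)) *
           (\<Sum>n\<le>m. (-1) ^ n * real (m choose n) * (\<beta>1 / \<beta>2) ^ n
                      * besselI n (\<beta>1 * \<beta>2 / (2 * \<alpha>)))"
proof -
  define S where "S = (\<Sum>n\<le>m. (-1)^n * real (m choose n) * bessel_series (\<beta>2^2/(4*\<alpha>)) n (\<beta>1^2/(4*\<alpha>)))"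
  have deriv: "(deriv ^^ m) (\<lambda>x. exp (- x) * (x / \<alpha>) powr (real m / 2) * besselI m (\<beta>2 * sqrt (x / \<alpha>))) (\<beta>1\<^sup>2 / (4 * \<alpha>))
      = (\<beta>2/(2*\<alpha>))^m * exp (-(\<beta>1^2/(4*\<alpha>))) * S"
    unfolding S_def using assms by (intro higher_deriv_besselI_kernel) auto
  have sum_besselI: "(\<Sum>n\<le>m. (-1) ^ n * real (m choose n) * (\<beta>1 / \<beta>2) ^ n * besselI n (\<beta>1 * \<beta>2 / (2 * \<alpha>))) = S"
    unfolding S_def using assms by (intro sum.cong) (simp_all add: besselI_eq_bessel_series mult.assoc)
  have exponents: "exp (-(\<beta>2^2/(4*\<alpha>))) * exp (-(\<beta>1^2/(4*\<alpha>))) = exp (- (\<beta>1\<^sup>2 + \<beta>2\<^sup>2) / (4 * \<alpha>))"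
    using assms(2) by (simp add: field_simps flip: exp_add)
  show ?thesis
    using has_integral_besselJ0_besselJ[OF assms(2), where a=\<beta>1 and b=\<beta>2 and m=m] exponents
    unfolding deriv sum_besselI S_def[symmetric] by (simp add: mult_ac)
qed

end
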